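(* Let $W_1,\dots,W_N$ be independent with $W_j\sim\mathrm{Bernoulli}(r_j)$. Let $\alpha_1,\dots,\alpha_N\ge0$ with $\sum_j\alpha_j=1$, and set $N_\alpha=1/\max_j\alpha_j$. Let $\hat r=\sum_j\alpha_jW_j$ and $r^*=\sum_j\alpha_jr_j$. Then for any $r$ with $0<r<r^*$, $$\Pr(\hat r<r)\le\exp\{-N_\alpha D(r\|r^* )\},$$ and for any $\tilde r$ with $r^*<\tilde r<1$, $$\Pr(\hat r>\tilde r)\le\exp\{-N_\alpha D(\tilde r\|r^* )\},$$ where $D(p\|q)=p\log\frac pq+(1-p)\log\frac{1-p}{1-q}$ is the relative entropy between Bernoulli$(p)$ and Bernoulli$(q)$. *)

theory Defs
  imports "HOL-Probability.Probability"
begin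

definition bern_kl :: "real \<Rightarrow> real \<Rightarrow> real" where
  "bern_kl p q = p * ln (p / q) + (1 - p) * ln ((1 - p) / (1 - q))"

end

(* Chernoff's method. Markov's inequality applied to exp (l * rhat) reduces both tails to the
   moment generating function, which factors over the independent coordinates. With m = max alpha_j,
   each factor 1 - r_j + r_j e^(l alpha_j) is at most (1 - r_j + r_j e^(l m)) powr (alpha_j / m), by
   Hoelder's inequality (convexity of the Bernoulli log-MGF, which vanishes at 0); weighted AM-GM then
   bounds the product by (1 - rstar + rstar e^(l m)) powr (1 / m). The exponent is minimised by
   e^(l m) = x (1 - rstar) / (rstar (1 - x)), where it equals -D(x || rstar) / m. *)
theory Submission
  imports Defs
begin

lemma bernoulli_mgf_scaled_le:
  fixes p b t :: real
  assumes "0 \<le> p" "p \<le> 1" "0 \<le> b" "b \<le> 1"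
  shows "1 - p + p * exp (b * t) \<le> (1 - p + p * exp t) powr b"
proof -
  define A where "A = 1 - p + p * exp t"
  have A_pos: "A > 0"
    unfolding A_def using assms by (smt (verit) exp_gt_zero mult_nonneg_nonneg mult_pos_pos)
  have young: "(y / A) powr b \<le> b * (y / A) + (1 - b)" if "y > 0" for y
    using Youngs_inequality_0[of b "1 - b" "y / A" 1] that A_pos assms by simp
  have "(1 - p + p * exp (b * t)) / A powr b = (1 - p) * (1 / A) powr b + p * (exp t / A) powr b"
    using A_pos by (simp add: powr_divide exp_powr_real field_simps)
  also have "\<dots> \<le> (1 - p) * (b * (1 / A) + (1 - b)) + p * (b * (exp t / A) + (1 - b))"
    using young[of 1] young[of "exp t"] assms by (intro add_mono mult_left_mono) auto
  also have "\<dots> = b * (1 - p + p * exp t) / A + (1 - b)"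
    using A_pos by (simp add: field_simps)
  also have "\<dots> = 1"
    using A_pos by (simp add: A_def)
  finally show ?thesis
    using A_pos by (simp add: A_def divide_le_eq)
qed

lemma prod_powr_le_weighted_sum:
  fixes a x :: "'a \<Rightarrow> real"
  assumes "finite I" "(\<Sum>i\<in>I. a i) = 1"
    and "\<And>i. i \<in> I \<Longrightarrow> 0 \<le> a i" "\<And>i. i \<in> I \<Longrightarrow> 0 < x i"
  shows "(\<Prod>i\<in>I. x i powr a i) \<le> (\<Sum>i\<in>I. a i * x i)"
proof -
  obtain j where j: "j \<in> I" "a j > 0"
    using assms(2,3) sum.neutral[of I a] by (metis less_eq_real_def zero_neq_one)
  then have "I \<noteq> {}"
    by auto
  have "(\<Prod>i\<in>I. x i powr a i) = exp (\<Sum>i\<in>I. a i * ln (x i))"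
    using assms(1,4) by (simp add: exp_sum powr_def mult.commute less_imp_neq[symmetric] cong: prod.cong)
  also have "\<dots> \<le> exp (ln (\<Sum>i\<in>I. a i * x i))"
    using concave_on_sum[OF assms(1) \<open>I \<noteq> {}\<close> ln_concave assms(2,3), of x] assms(4) by auto
  also have "\<dots> = (\<Sum>i\<in>I. a i * x i)"
    using j assms by (intro exp_ln sum_pos2[of I j]) (auto intro: mult_nonneg_nonneg less_imp_le)
  finally show ?thesis .
qed

lemma ln_bernoulli_mgf_at_optimal_tilt:
  fixes q x :: real
  assumes "0 < q" "q < 1" "0 < x" "x < 1"
  defines "t \<equiv> ln (x * (1 - q) / (q * (1 - x)))"
  shows "ln (1 - q + q * exp t) - t * x = - bern_kl x q"
proof -
  have "1 - q + q * exp t = (1 - q) / (1 - x)"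
    using assms by (simp add: t_def field_simps)
  then have ln_mgf: "ln (1 - q + q * exp t) = ln (1 - q) - ln (1 - x)"
    using assms by (simp add: ln_div)
  have t_eq: "t = ln x + ln (1 - q) - ln q - ln (1 - x)"
    using assms by (simp add: t_def ln_div ln_mult)
  have kl_eq: "bern_kl x q = x * (ln x - ln q) + (1 - x) * (ln (1 - x) - ln (1 - q))"
    using assms by (simp add: bern_kl_def ln_div)
  show ?thesis
    unfolding ln_mgf by (simp add: t_eq kl_eq algebra_simps)
qed

text \<open>For q = 0 or q = 1 the true divergence is in general infinite, but the junk values
  y / 0 = 0 and ln 0 = 0 make \<^const>\<open>bern_kl\<close> nonpositive there, so the tail bounds become trivial.\<close>
lemma bern_kl_degenerate_nonpos:
  fixes x q :: real
  assumes "0 \<le> x" "x \<le> 1" "q = 0 \<or> q = 1"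
  shows "bern_kl x q \<le> 0"
proof -
  have ln_nonpos: "ln y \<le> 0" if "0 \<le> y" "y \<le> 1" for y :: real
    using that by (cases "y = 0") auto
  show ?thesis
    using assms by (auto simp: bern_kl_def intro!: mult_nonneg_nonpos ln_nonpos)
qed

locale weighted_bernoulli_sum =
  fixes I :: "'a set" and p alpha :: "'a \<Rightarrow> real" and m :: real
  assumes finite_I: "finite I"
    and p_range: "\<And>i. i \<in> I \<Longrightarrow> 0 \<le> p i \<and> p i \<le> 1"
    and alpha_nonneg: "\<And>i. i \<in> I \<Longrightarrow> 0 \<le> alpha i"
    and alpha_sum: "(\<Sum>i\<in>I. alpha i) = 1"
    and alpha_le: "\<And>i. i \<in> I \<Longrightarrow> alpha i \<le> m"
begin

definition W :: "('a \<Rightarrow> bool) pmf" where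
  "W = Pi_pmf I False (\<lambda>i. bernoulli_pmf (p i))"

definition rhat :: "('a \<Rightarrow> bool) \<Rightarrow> real" where
  "rhat w = (\<Sum>i\<in>I. alpha i * (if w i then 1 else 0))"

definition rstar :: real where
  "rstar = (\<Sum>i\<in>I. alpha i * p i)"

lemma m_pos: "m > 0"
proof -
  have "1 \<le> real (card I) * m"
    using sum_mono[of I alpha "\<lambda>_. m"] alpha_le alpha_sum by simp
  then have "0 < real (card I) * m"
    by linarith
  then show ?thesis
    by (simp add: zero_less_mult_iff)
qed

lemma rstar_range: "0 \<le> rstar \<and> rstar \<le> 1"
proof
  show "0 \<le> rstar"
    unfolding rstar_def using p_range alpha_nonneg by (intro sum_nonneg) auto
  have "rstar \<le> (\<Sum>i\<in>I. alpha i)"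
    unfolding rstar_def using p_range alpha_nonneg by (intro sum_mono) (simp add: mult_left_le)
  then show "rstar \<le> 1"
    using alpha_sum by simp
qed

lemma exp_rhat_eq_prod:
  "exp (l * rhat w) = (\<Prod>i\<in>I. exp (l * alpha i * (if w i then 1 else 0)))"
  by (simp add: rhat_def exp_sum finite_I sum_distrib_left mult.assoc)

lemma expectation_exp_rhat_le:
  "measure_pmf.expectation W (\<lambda>w. exp (l * rhat w)) \<le> (1 - rstar + rstar * exp (l * m)) powr (1 / m)"
proof -
  define x where "x i = 1 - p i + p i * exp (l * m)" for i
  have x_pos: "x i > 0" if "i \<in> I" for i
    using p_range[OF that] unfolding x_def by (smt (verit) exp_gt_zero mult_nonneg_nonneg mult_pos_pos)
  have "measure_pmf.expectation W (\<lambda>w. exp (l * rhat w))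
      = (\<Prod>i\<in>I. measure_pmf.expectation (bernoulli_pmf (p i)) (\<lambda>v. exp (l * alpha i * (if v then 1 else 0))))"
    unfolding W_def exp_rhat_eq_prod
    by (rule expectation_prod_Pi_pmf) (auto simp: finite_I intro: integrable_measure_pmf_finite)
  also have "\<dots> = (\<Prod>i\<in>I. 1 - p i + p i * exp (alpha i / m * (l * m)))"
    using p_range m_pos by (intro prod.cong) (auto simp: algebra_simps)
  also have "\<dots> \<le> (\<Prod>i\<in>I. x i powr (alpha i / m))"
  proof (rule prod_mono)
    fix i assume "i \<in> I"
    then have "0 \<le> alpha i / m" "alpha i / m \<le> 1" "0 \<le> p i" "p i \<le> 1"
      using alpha_nonneg alpha_le p_range m_pos by auto
    then show "0 \<le> 1 - p i + p i * exp (alpha i / m * (l * m))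
        \<and> 1 - p i + p i * exp (alpha i / m * (l * m)) \<le> x i powr (alpha i / m)"
      using bernoulli_mgf_scaled_le unfolding x_def by (smt (verit) exp_gt_zero mult_nonneg_nonneg)
  qed
  also have "\<dots> = (\<Prod>i\<in>I. x i powr alpha i) powr (1 / m)"
    by (simp add: prod_powr_distrib powr_powr)
  also have "\<dots> \<le> (\<Sum>i\<in>I. alpha i * x i) powr (1 / m)"
    using m_pos x_pos alpha_nonneg
    by (intro powr_mono2 prod_powr_le_weighted_sum finite_I alpha_sum prod_nonneg) auto
  also have "(\<Sum>i\<in>I. alpha i * x i) = 1 - rstar + rstar * exp (l * m)"
    unfolding x_def rstar_def
    by (simp add: algebra_simps sum.distrib sum_subtractf sum_distrib_left sum_distrib_right alpha_sum)
  finally show ?thesis .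
qed

lemma prob_tilted_le:
  assumes "0 < x" "x < 1" "0 < rstar" "rstar < 1"
  defines "t \<equiv> ln (x * (1 - rstar) / (rstar * (1 - x)))"
  shows "measure_pmf.prob W {w. t * x \<le> t * rhat w} \<le> exp (- (1 / m) * bern_kl x rstar)"
proof -
  define l where "l = t / m"
  have integrable: "integrable (measure_pmf W) (\<lambda>w. exp (l * rhat w))"
    unfolding W_def exp_rhat_eq_prod
    by (rule integrable_prod_Pi_pmf) (auto simp: finite_I intro: integrable_measure_pmf_finite)
  have mgf_pos: "1 - rstar + rstar * exp t > 0"
    using assms(3,4) by (smt (verit) exp_gt_zero mult_pos_pos)
  have "measure_pmf.prob W {w. t * x \<le> t * rhat w}
      = measure_pmf.prob W {w \<in> space (measure_pmf W). exp (l * x) \<le> exp (l * rhat w)}"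
    by (rule arg_cong[where f = "measure_pmf.prob W"]) (use m_pos in \<open>auto simp: l_def field_simps\<close>)
  also have "\<dots> \<le> measure_pmf.expectation W (\<lambda>w. exp (l * rhat w)) / exp (l * x)"
    by (rule integral_Markov_inequality_measure[OF integrable]) auto
  also have "\<dots> \<le> (1 - rstar + rstar * exp t) powr (1 / m) / exp (l * x)"
    using expectation_exp_rhat_le[of l] m_pos by (simp add: l_def divide_right_mono)
  also have "\<dots> = exp (1 / m * (ln (1 - rstar + rstar * exp t) - t * x))"
    using mgf_pos by (simp add: powr_def exp_diff l_def algebra_simps)
  also have "\<dots> = exp (- (1 / m) * bern_kl x rstar)"
    using ln_bernoulli_mgf_at_optimal_tilt[OF assms(3,4,1,2)] by (simp add: t_def)
  finally show ?thesis .
qed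

lemma prob_le_exp_if_bern_kl_nonpos:
  assumes "bern_kl x rstar \<le> 0"
  shows "measure_pmf.prob W S \<le> exp (- (1 / m) * bern_kl x rstar)"
proof -
  have "1 \<le> exp (- (1 / m) * bern_kl x rstar)"
    using assms m_pos by (simp add: divide_nonpos_pos)
  then show ?thesis
    using measure_pmf.prob_le_1 order_trans by blast
qed

lemma lower_tail:
  assumes "0 < x" "x < rstar"
  shows "measure_pmf.prob W {w. rhat w < x} \<le> exp (- (1 / m) * bern_kl x rstar)"
proof (cases "rstar = 1")
  case True
  then show ?thesis
    using assms by (intro prob_le_exp_if_bern_kl_nonpos bern_kl_degenerate_nonpos) auto
next
  case False
  then have rstar: "0 < rstar" "rstar < 1"
    using rstar_range assms by auto
  define t where "t = ln (x * (1 - rstar) / (rstar * (1 - x)))"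
  have "x * (1 - rstar) / (rstar * (1 - x)) < 1"
    using assms rstar by (simp add: field_simps)
  then have "t < 0"
    using assms rstar by (simp add: t_def)
  then have "{w. rhat w < x} \<subseteq> {w. t * x \<le> t * rhat w}"
    by (auto intro: mult_left_mono_neg)
  then have "measure_pmf.prob W {w. rhat w < x} \<le> measure_pmf.prob W {w. t * x \<le> t * rhat w}"
    by (rule measure_pmf.finite_measure_mono) simp
  also have "\<dots> \<le> exp (- (1 / m) * bern_kl x rstar)"
    unfolding t_def using assms rstar by (intro prob_tilted_le) auto
  finally show ?thesis .
qed

lemma upper_tail:
  assumes "rstar < x" "x < 1"
  shows "measure_pmf.prob W {w. rhat w > x} \<le> exp (- (1 / m) * bern_kl x rstar)"
proof (cases "rstar = 0")
  case True
  then show ?thesis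
    using assms by (intro prob_le_exp_if_bern_kl_nonpos bern_kl_degenerate_nonpos) auto
next
  case False
  then have rstar: "0 < rstar" "rstar < 1"
    using rstar_range assms by auto
  define t where "t = ln (x * (1 - rstar) / (rstar * (1 - x)))"
  have "x * (1 - rstar) / (rstar * (1 - x)) > 1"
    using assms rstar by (simp add: field_simps)
  then have "t > 0"
    by (simp add: t_def)
  then have "{w. rhat w > x} \<subseteq> {w. t * x \<le> t * rhat w}"
    by auto
  then have "measure_pmf.prob W {w. rhat w > x} \<le> measure_pmf.prob W {w. t * x \<le> t * rhat w}"
    by (rule measure_pmf.finite_measure_mono) simp
  also have "\<dots> \<le> exp (- (1 / m) * bern_kl x rstar)"
    unfolding t_def using assms rstar by (intro prob_tilted_le) auto
  finally show ?thesis .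
qed

end

theorem mainTheorem8:
  fixes N :: nat and rr alpha :: "nat \<Rightarrow> real" and r r' :: real
  assumes "N \<ge> 1"
    and "\<And>j. j < N \<Longrightarrow> 0 \<le> rr j \<and> rr j \<le> 1"
    and "\<And>j. j < N \<Longrightarrow> alpha j \<ge> 0"
    and "(\<Sum>j<N. alpha j) = 1"
  defines "Nalpha \<equiv> 1 / Max (alpha ` {..<N})"
    and "rstar \<equiv> (\<Sum>j<N. alpha j * rr j)"
    and "W \<equiv> Pi_pmf {..<N} False (\<lambda>j. bernoulli_pmf (rr j))"
    and "rhat \<equiv> (\<lambda>w :: nat \<Rightarrow> bool. \<Sum>j<N. alpha j * (if w j then 1 else 0))"
  shows "(0 < r \<and> r < rstar \<longrightarrow>
           measure_pmf.prob W {w. rhat w < r} \<le> exp (- Nalpha * bern_kl r rstar))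
       \<and> (rstar < r' \<and> r' < 1 \<longrightarrow>
           measure_pmf.prob W {w. rhat w > r'} \<le> exp (- Nalpha * bern_kl r' rstar))"
proof -
  define m where "m = Max (alpha ` {..<N})"
  interpret B: weighted_bernoulli_sum "{..<N}" rr alpha m
    using assms(2-4) by unfold_locales (auto simp: m_def intro: Max_ge)
  have "W = B.W" "rhat = B.rhat" "rstar = B.rstar" "Nalpha = 1 / m"
    by (simp_all add: W_def B.W_def rhat_def B.rhat_def fun_eq_iff rstar_def B.rstar_def
        Nalpha_def m_def)
  then show ?thesis
    using B.lower_tail[of r] B.upper_tail[of r'] by auto
qed

end
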